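(* Let $K\subset\mathbb{R}^3$ be finite, let $M\subset\mathbb{R}^3$ with $K^{rc}\subset M$, let $p$ be a point in $M\setminus K$, and let $B$ be a $D$-prism for $(M,K,p)$. Then $K^{rc}\subset M\setminus B$.
   Context: A horizontal segment/line is one contained in a plane $\{z=c\}$; a vertical one is parallel to the $z$ axis. A function $f:\mathbb{R}^3\to\mathbb{R}$ is $2+1$-convex if its restriction to every horizontal and every vertical line is convex; for compact $S$, $S^{rc}=\{x: f(x)\le\sup_S f\text{ for every } 2+1\text{-convex } f\}$. For $M\subset\mathbb{R}^3$, $p\in M$ is an extremal point of $M$ if no relatively open horizontal or vertical segment contained in $M$ contains $p$. Let $K$ be finite, $M\supset K^{rc}$, and $p\in M$ an extremal point of $M$ with $p\notin K$. A $D$-prism for $(M,K,p)$ is the interior $B$ of a product $T\times H$, where $T$ is a (closed) triangle in a horizontal plane (identified with a triangle in $\mathbb{R}^2$) and $H$ is a vertical segment (identified with a compact interval in $\mathbb{R}$), such that: $p\in B$; $K\cap B=\emptyset$; and $M\cap\partial B$ is contained in the union of just one of the three closed vertical rectangular faces of $\partial B$ and just one of the two closed horizontal triangular faces of $\partial B$. *)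

theory Defs
  imports "HOL-Analysis.Analysis"
begin

text \<open>Points of R^3 are modelled as ((x,y),z) :: (real \<times> real) \<times> real;
  the height coordinate z is snd, the horizontal coordinates (x,y) are fst.\<close>

type_synonym pt3 = "(real \<times> real) \<times> real"

definition rc_convex :: "(pt3 \<Rightarrow> real) \<Rightarrow> bool" where
  "rc_convex f \<longleftrightarrow>
     (\<forall>x v. snd v = 0 \<longrightarrow> convex_on UNIV (\<lambda>t. f (x + t *\<^sub>R v))) \<and>
     (\<forall>x. convex_on UNIV (\<lambda>t. f (x + t *\<^sub>R ((0,0),1))))"

definition rc_hull :: "pt3 set \<Rightarrow> pt3 set" where
  "rc_hull S = {x. \<forall>f. rc_convex f \<longrightarrow> f x \<le> Sup (f ` S)}"

definition extremal_point :: "pt3 set \<Rightarrow> pt3 \<Rightarrow> bool" where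
  "extremal_point M p \<longleftrightarrow> p \<in> M \<and>
     \<not> (\<exists>a b. a \<noteq> b \<and> (snd a = snd b \<or> fst a = fst b) \<and>
              open_segment a b \<subseteq> M \<and> p \<in> open_segment a b)"

definition D_prism :: "pt3 set \<Rightarrow> pt3 set \<Rightarrow> pt3 \<Rightarrow> pt3 set \<Rightarrow> bool" where
  "D_prism M K p B \<longleftrightarrow>
     (\<exists>(a::real\<times>real) b c (h0::real) h1.
        let T = convex hull {a, b, c}; H = {h0..h1} in
        B = interior (T \<times> H) \<and> p \<in> B \<and> K \<inter> B = {} \<and>
        (\<exists>F \<in> {closed_segment a b \<times> H, closed_segment b c \<times> H, closed_segment c a \<times> H}.
         \<exists>G \<in> {T \<times> {h0}, T \<times> {h1}}.
            M \<inter> frontier B \<subseteq> F \<union> G))"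

end

theory Submission
  imports Defs
begin

(* Suppose x lies in both K^rc and B. Take the vertical face F and the horizontal face G of
   the prism that carry M \<inter> frontier B, and let phi(u, z) = l(u) * w(z) with l and w affine,
   vanishing on F and on G respectively and positive at x. Then phi is affine on every
   horizontal and every vertical line, hence 2+1-convex, and phi <= 0 on K^rc \<inter> frontier B
   because K^rc \<subseteq> M. A maximum principle for K^rc gives phi(x) <= 0, a contradiction.
   For the maximum principle put psi = phi - phi(x)/2: compactness of frontier B and the
   definition of K^rc give a 2+1-convex g >= 0 vanishing on K with psi < g on frontier B.
   The function equal to max g psi inside B and to g outside agrees with g near frontier B;
   since convexity on a line is a local property, it is 2+1-convex. It vanishes on K but is
   positive at x. *)

lemma convex_on_affine_real: "convex_on UNIV (\<lambda>t::real. A + B * t)"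
  by (rule convex_onI) (simp_all add: algebra_simps)

lemma convex_on_max:
  assumes "convex_on S f" "convex_on S g"
  shows "convex_on S (\<lambda>x. max (f x) (g x))"
proof (rule convex_onI)
  fix t :: real and x y assume t: "0 < t" "t < 1" and xy: "x \<in> S" "y \<in> S"
  let ?m = "(1 - t) * max (f x) (g x) + t * max (f y) (g y)"
  have "f ((1 - t) *\<^sub>R x + t *\<^sub>R y) \<le> (1 - t) * f x + t * f y"
    "g ((1 - t) *\<^sub>R x + t *\<^sub>R y) \<le> (1 - t) * g x + t * g y"
    using convex_onD[OF assms(1)] convex_onD[OF assms(2)] t xy by auto
  moreover have "(1 - t) * f x + t * f y \<le> ?m" "(1 - t) * g x + t * g y \<le> ?m"
    using t by (intro add_mono mult_left_mono; simp)+
  ultimately show "max (f ((1 - t) *\<^sub>R x + t *\<^sub>R y)) (g ((1 - t) *\<^sub>R x + t *\<^sub>R y)) \<le> ?m"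
    by simp
qed (use assms convex_on_imp_convex in auto)

lemma convex_on_eq: "convex_on S f \<Longrightarrow> (\<And>x. x \<in> S \<Longrightarrow> f x = g x) \<Longrightarrow> convex_on S g"
  by (auto simp: convex_on_def convex_def)

lemma locally_convex_below_chord:
  fixes g :: "real \<Rightarrow> real"
  assumes cont: "continuous_on UNIV g" and loc: "\<And>t. \<exists>e>0. convex_on (ball t e) g"
    and ac: "a < c" and s: "s \<in> {a..c}"
  shows "g s \<le> g a + (s - a) / (c - a) * (g c - g a)"
proof (rule ccontr)
  assume above: "\<not> ?thesis"
  define k where "k = (g c - g a) / (c - a)"
  define L where "L = (\<lambda>s. g s - g a - k * (s - a))"
  have L_ends: "L a = 0" "L c = 0" unfolding L_def k_def using ac by auto
  have L_cont: "continuous_on UNIV L" unfolding L_def by (intro continuous_intros cont)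
  obtain m where m: "m \<in> {a..c}" "\<And>y. y \<in> {a..c} \<Longrightarrow> L y \<le> L m"
    using continuous_attains_sup[of "{a..c}" L] L_cont ac continuous_on_subset by force
  have "0 < L s" using above unfolding L_def k_def by (simp add: field_simps)
  then have "0 < L m" using m(2) s by force
  \<comment> \<open>Local convexity at the leftmost maximiser of L contradicts its being leftmost.\<close>
  define Z where "Z = {a..c} \<inter> {y. L y = L m}"
  have "closed Z" unfolding Z_def
    by (intro closed_Int closed_atLeastAtMost closed_Collect_eq continuous_intros L_cont)
  moreover have "bdd_below Z" "Z \<noteq> {}" using m unfolding Z_def by auto
  ultimately have tZ: "Inf Z \<in> Z" using closed_contains_Inf by blast
  define t where "t = Inf Z"
  have t: "a < t" "t < c" using tZ \<open>0 < L m\<close> L_ends unfolding Z_def t_def by (auto simp: le_less)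
  obtain e where e: "e > 0" "convex_on (ball t e) g" using loc by blast
  define r where "r = min (e/2) (min (t - a) (c - t))"
  have r: "0 < r" "r < e" "r \<le> t - a" "r \<le> c - t" using e t unfolding r_def by auto
  have "(t - r) / 2 + (t + r) / 2 = t" by (simp add: field_simps)
  then have "g t \<le> (1/2) * g (t - r) + (1/2) * g (t + r)"
    using convex_onD[OF e(2), of "1/2" "t - r" "t + r"] r by (simp add: dist_real_def)
  then have "L t \<le> (1/2) * L (t - r) + (1/2) * L (t + r)"
    unfolding L_def by (simp add: algebra_simps)
  moreover have "L (t + r) \<le> L m" using m(2) r t by auto
  moreover have "t - r \<notin> Z"
    using cInf_lower[OF _ \<open>bdd_below Z\<close>, of "t - r"] r unfolding t_def by auto
  then have "L (t - r) < L m" using m(2)[of "t - r"] r t unfolding Z_def by force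
  moreover have "L t = L m" using tZ unfolding Z_def t_def by simp
  ultimately show False by simp
qed

lemma convex_on_UNIV_if_locally_convex:
  fixes g :: "real \<Rightarrow> real"
  assumes loc: "\<And>t. \<exists>e>0. convex_on (ball t e) g"
  shows "convex_on UNIV g"
proof (rule convex_on_linorderI)
  have "isCont g t" for t
  proof -
    obtain e where e: "e > 0" "convex_on (ball t e) g" using loc by blast
    then have "continuous_on (ball t e) g" using convex_on_continuous by blast
    then show ?thesis using e(1) continuous_on_interior by fastforce
  qed
  then have cont: "continuous_on UNIV g" by (simp add: continuous_at_imp_continuous_on)
  fix t x y :: real assume t: "0 < t" "t < 1" and "x < y"
  have "0 \<le> t * (y - x)" "0 \<le> (1 - t) * (y - x)" using t \<open>x < y\<close> by simp_all
  then have "(1 - t) * x + t * y \<in> {x..y}" by (simp add: algebra_simps)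
  from locally_convex_below_chord[OF cont loc \<open>x < y\<close> this]
  have "g ((1 - t) * x + t * y) \<le> g x + ((1 - t) * x + t * y - x) / (y - x) * (g y - g x)" .
  also have "((1 - t) * x + t * y - x) / (y - x) = t" using \<open>x < y\<close> by (simp add: field_simps)
  finally show "g ((1 - t) *\<^sub>R x + t *\<^sub>R y) \<le> (1 - t) * g x + t * g y" by (simp add: algebra_simps)
qed simp

lemma rc_convex_iff_lines:
  "rc_convex f \<longleftrightarrow>
     (\<forall>x v. snd v = 0 \<or> v = ((0, 0), 1) \<longrightarrow> convex_on UNIV (\<lambda>t. f (x + t *\<^sub>R v)))"
  unfolding rc_convex_def by blast

lemma rc_convex_const: "rc_convex (\<lambda>_. c)"
  by (simp add: rc_convex_def convex_on_const)

lemma rc_convex_affine: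
  assumes "rc_convex f" "0 \<le> A"
  shows "rc_convex (\<lambda>w. A * f w + C)"
  using assms unfolding rc_convex_def by (auto intro!: convex_on_add convex_on_cmul simp: convex_on_const)

lemma rc_convex_max:
  assumes "rc_convex f" "rc_convex g"
  shows "rc_convex (\<lambda>w. max (f w) (g w))"
  unfolding rc_convex_iff_lines
proof (intro allI impI)
  fix x v :: pt3 assume "snd v = 0 \<or> v = ((0, 0), 1)"
  then have "convex_on UNIV (\<lambda>t. f (x + t *\<^sub>R v))" "convex_on UNIV (\<lambda>t. g (x + t *\<^sub>R v))"
    using assms unfolding rc_convex_iff_lines by blast+
  then show "convex_on UNIV (\<lambda>t. max (f (x + t *\<^sub>R v)) (g (x + t *\<^sub>R v)))"
    by (rule convex_on_max)
qed

lemma rc_convex_Max: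
  assumes "finite Y" "\<And>y. y \<in> Y \<Longrightarrow> rc_convex (g y)"
  shows "rc_convex (\<lambda>w. Max (insert 0 ((\<lambda>y. g y w) ` Y)))"
  using assms
proof (induction Y rule: finite_induct)
  case empty
  then show ?case by (simp add: rc_convex_const)
next
  case (insert y Y)
  have "Max (insert 0 (insert (g y w) ((\<lambda>y. g y w) ` Y))) =
      max (g y w) (Max (insert 0 ((\<lambda>y. g y w) ` Y)))" for w
    using insert.hyps(1) by (subst insert_commute) simp
  then show ?case using insert by (simp only: image_insert) (simp add: rc_convex_max)
qed

lemma rc_convex_horizontal:
  assumes "rc_convex f"
  shows "convex_on UNIV (\<lambda>u. f (u, z))"
proof (rule convex_onI)
  fix t :: real and u1 u2 :: "real \<times> real" assume "0 < t" "t < 1"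
  have "convex_on UNIV (\<lambda>s. f ((u1, z) + s *\<^sub>R (u2 - u1, 0)))"
    using assms unfolding rc_convex_def by (metis snd_conv)
  from convex_onD[OF this, of t 0 1] \<open>0 < t\<close> \<open>t < 1\<close>
  show "f ((1 - t) *\<^sub>R u1 + t *\<^sub>R u2, z) \<le> (1 - t) * f (u1, z) + t * f (u2, z)"
    by (simp add: algebra_simps)
qed simp

lemma rc_convex_vertical:
  assumes "rc_convex f"
  shows "convex_on UNIV (\<lambda>z. f (u, z))"
proof -
  have "convex_on UNIV (\<lambda>s. f ((u, 0) + s *\<^sub>R ((0, 0), 1)))"
    using assms unfolding rc_convex_def by blast
  then show ?thesis by (simp flip: zero_prod_def)
qed

lemma convex_on_abs_diff_le:
  fixes \<phi> :: "real \<Rightarrow> real"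
  assumes cvx: "convex_on UNIV \<phi>" and M: "\<phi> (z0 - 1) \<le> M" "\<phi> (z0 + 1) \<le> M"
    and z: "\<bar>z - z0\<bar> \<le> 1"
  shows "\<bar>\<phi> z - \<phi> z0\<bar> \<le> \<bar>z - z0\<bar> * (M - \<phi> z0)"
proof -
  have upper: "\<phi> w \<le> \<phi> z0 + \<bar>w - z0\<bar> * (M - \<phi> z0)" if w: "\<bar>w - z0\<bar> \<le> 1" for w
  proof -
    define s where "s = \<bar>w - z0\<bar>"
    define e where "e = (if z0 \<le> w then z0 + 1 else z0 - 1)"
    have s: "0 \<le> s" "s \<le> 1" using w unfolding s_def by auto
    have "(1 - s) *\<^sub>R z0 + s *\<^sub>R e = w" unfolding s_def e_def by (simp add: algebra_simps)
    moreover have "\<phi> e \<le> M" using M unfolding e_def by simp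
    then have "s * \<phi> e \<le> s * M" using s by (simp add: mult_left_mono)
    ultimately show ?thesis
      using convex_onD[OF cvx, of s z0 e] s unfolding s_def by (simp add: algebra_simps)
  qed
  \<comment> \<open>The lower bound comes from the upper bound at the reflected point 2 z0 - z.\<close>
  have "(1/2) *\<^sub>R z + (1/2) *\<^sub>R (2 * z0 - z) = z0" by (simp add: algebra_simps)
  then have "\<phi> z0 \<le> (1/2) * \<phi> z + (1/2) * \<phi> (2 * z0 - z)"
    using convex_onD[OF cvx, of "1/2" z "2 * z0 - z"] by simp
  moreover have "\<phi> (2 * z0 - z) \<le> \<phi> z0 + \<bar>z - z0\<bar> * (M - \<phi> z0)"
    using upper[of "2 * z0 - z"] z by (simp add: abs_minus_commute)
  ultimately show ?thesis using upper[OF z] by (simp add: abs_le_iff)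
qed

lemma rc_convex_continuous:
  assumes rc: "rc_convex f"
  shows "continuous_on UNIV f"
proof -
  have horiz: "continuous_on UNIV (\<lambda>u. f (u, z))" for z
    using convex_on_continuous[OF open_UNIV rc_convex_horizontal[OF rc]] .
  have "isCont f (u0, z0)" for u0 z0
  proof -
    have "bounded ((\<lambda>u. f (u, z)) ` cball u0 1)" for z
      by (intro compact_imp_bounded compact_continuous_image continuous_on_subset[OF horiz]) auto
    then have "bounded (\<Union>z\<in>{z0 - 1, z0, z0 + 1}. (\<lambda>u. f (u, z)) ` cball u0 1)" by simp
    then obtain C
      where C: "\<And>u z. u \<in> cball u0 1 \<Longrightarrow> z \<in> {z0 - 1, z0, z0 + 1} \<Longrightarrow> \<bar>f (u, z)\<bar> \<le> C"
      unfolding bounded_iff by fastforce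
    have "\<forall>\<^sub>F w in at (u0, z0). dist w (u0, z0) < 1"
      using eventually_at_ball[of 1 "(u0, z0)" UNIV] by (simp add: dist_commute)
    then have "\<forall>\<^sub>F w in at (u0, z0). norm (f w - f (fst w, z0)) \<le> 2 * C * \<bar>snd w - z0\<bar>"
    proof (rule eventually_mono)
      fix w assume "dist w (u0, z0) < 1"
      then have u: "fst w \<in> cball u0 1" and z: "\<bar>snd w - z0\<bar> \<le> 1"
        using dist_fst_le[of w "(u0, z0)"] dist_snd_le[of w "(u0, z0)"]
        by (auto simp: dist_real_def dist_commute)
      have "f (fst w, z0 - 1) \<le> C" "f (fst w, z0 + 1) \<le> C" using C[OF u] by force+
      then have "\<bar>f (fst w, snd w) - f (fst w, z0)\<bar> \<le> \<bar>snd w - z0\<bar> * (C - f (fst w, z0))"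
        by (rule convex_on_abs_diff_le[OF rc_convex_vertical[OF rc] _ _ z])
      also have "\<dots> \<le> \<bar>snd w - z0\<bar> * (2 * C)"
        using C[OF u, of z0] by (intro mult_left_mono) auto
      finally show "norm (f w - f (fst w, z0)) \<le> 2 * C * \<bar>snd w - z0\<bar>" by (simp add: mult.commute)
    qed
    moreover have "((\<lambda>w. 2 * C * \<bar>snd w - z0\<bar>) \<longlongrightarrow> 2 * C * \<bar>snd (u0, z0) - z0\<bar>) (at (u0, z0))"
      by (intro tendsto_intros)
    ultimately have "((\<lambda>w. f w - f (fst w, z0)) \<longlongrightarrow> 0) (at (u0, z0))"
      by (simp add: Lim_null_comparison)
    moreover have "isCont (\<lambda>u. f (u, z0)) u0"
      using horiz[of z0] continuous_on_eq_continuous_at[OF open_UNIV] by blast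
    then have "((\<lambda>w. f (fst w, z0)) \<longlongrightarrow> f (u0, z0)) (at (u0, z0))"
      using isCont_tendsto_compose tendsto_fst[OF tendsto_ident_at, of "(u0, z0)" UNIV] by fastforce
    ultimately have "(f \<longlongrightarrow> f (u0, z0)) (at (u0, z0))"
      using tendsto_add by fastforce
    then show ?thesis unfolding isCont_def .
  qed
  then show ?thesis by (simp add: continuous_at_imp_continuous_on)
qed

lemma rc_hull_empty: "rc_hull {} = {}"
proof -
  have "\<not> f x \<le> Sup (f ` {})" if "f = (\<lambda>_. Sup ({} :: real set) + 1)" for f and x :: pt3
    using that by simp
  then show ?thesis unfolding rc_hull_def using rc_convex_const by blast
qed

lemma rc_hull_separating_function:
  assumes "finite K" "y \<notin> rc_hull K"
  obtains g where "rc_convex g" "\<And>k. k \<in> K \<Longrightarrow> g k \<le> 0" "c < g y"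
proof -
  obtain f where f: "rc_convex f" "Sup (f ` K) < f y"
    using assms(2) unfolding rc_hull_def by force
  define s where "s = Sup (f ` K)"
  define A where "A = (\<bar>c\<bar> + 1) / (f y - s)"
  define C where "C = - A * s"
  have "0 < A" using f(2) unfolding A_def s_def by simp
  show thesis
  proof (rule that)
    show "rc_convex (\<lambda>w. A * f w + C)" using rc_convex_affine[OF f(1)] \<open>0 < A\<close> by simp
    fix k assume "k \<in> K"
    then have "f k \<le> s" unfolding s_def using assms(1) by (intro cSup_upper) auto
    then show "A * f k + C \<le> 0" using \<open>0 < A\<close> unfolding C_def by (simp add: mult_left_mono)
  next
    have "A * f y + C = A * (f y - s)" unfolding C_def by (simp add: algebra_simps)
    also have "\<dots> = \<bar>c\<bar> + 1" using f(2) unfolding A_def s_def by simp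
    finally show "c < A * f y + C" by simp
  qed
qed

lemma rc_convex_above_on_compact:
  assumes "finite K" "compact S" "continuous_on UNIV \<psi>" "S \<inter> rc_hull K = {}"
  obtains g where "rc_convex g" "\<And>w. 0 \<le> g w" "\<And>k. k \<in> K \<Longrightarrow> g k = 0"
    "\<And>y. y \<in> S \<Longrightarrow> \<psi> y < g y"
proof -
  have "\<exists>g. rc_convex g \<and> (\<forall>k\<in>K. g k \<le> 0) \<and> \<psi> y < g y" if "y \<in> S" for y
  proof -
    have "y \<notin> rc_hull K" using assms(4) that by blast
    then obtain g where "rc_convex g" "\<And>k. k \<in> K \<Longrightarrow> g k \<le> 0" "\<psi> y < g y"
      using rc_hull_separating_function[OF assms(1)] by blast
    then show ?thesis by blast
  qed
  then obtain gs
    where gs: "\<And>y. y \<in> S \<Longrightarrow> rc_convex (gs y) \<and> (\<forall>k\<in>K. gs y k \<le> 0) \<and> \<psi> y < gs y y"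
    by metis
  have "\<And>y. y \<in> S \<Longrightarrow> open {w. \<psi> w < gs y w}"
    using gs by (intro open_Collect_less assms(3) rc_convex_continuous) auto
  moreover have "S \<subseteq> (\<Union>y\<in>S. {w. \<psi> w < gs y w})" using gs by auto
  ultimately obtain Y where Y: "Y \<subseteq> S" "finite Y" "S \<subseteq> (\<Union>y\<in>Y. {w. \<psi> w < gs y w})"
    by (rule compactE_image[OF assms(2)])
  show thesis
  proof (rule that)
    show "rc_convex (\<lambda>w. Max (insert 0 ((\<lambda>y. gs y w) ` Y)))"
      using Y(1,2) gs by (intro rc_convex_Max) auto
    show "0 \<le> Max (insert 0 ((\<lambda>y. gs y w) ` Y))" for w using Y(2) by simp
    show "Max (insert 0 ((\<lambda>y. gs y k) ` Y)) = 0" if "k \<in> K" for k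
      using Y(1,2) gs that by (intro antisym) auto
    show "\<psi> y < Max (insert 0 ((\<lambda>y'. gs y' y) ` Y))" if "y \<in> S" for y
    proof -
      obtain y' where "y' \<in> Y" "\<psi> y < gs y' y" using Y(3) \<open>y \<in> S\<close> by blast
      moreover have "gs y' y \<le> Max (insert 0 ((\<lambda>y'. gs y' y) ` Y))"
        using Y(2) \<open>y' \<in> Y\<close> by (intro Max_ge) auto
      ultimately show ?thesis by linarith
    qed
  qed
qed

lemma convex_on_glue:
  fixes g k :: "real \<Rightarrow> real"
  assumes g: "convex_on UNIV g" and k: "convex_on UNIV k" and U: "open U"
    and frontier: "\<And>t. t \<in> frontier U \<Longrightarrow> k t < g t"
  shows "convex_on UNIV (\<lambda>t. if t \<in> U then max (g t) (k t) else g t)"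
proof (rule convex_on_UNIV_if_locally_convex)
  fix t0
  let ?h = "\<lambda>t. if t \<in> U then max (g t) (k t) else g t"
  have "continuous_on UNIV g" "continuous_on UNIV k"
    using g k by (simp_all add: convex_on_continuous)
  then have "open {t. k t < g t}" by (rule open_Collect_less[rotated])
  have "\<exists>V f. open V \<and> t0 \<in> V \<and> convex_on UNIV f \<and> (\<forall>t\<in>V. ?h t = f t)"
  proof -
    have "k t0 < g t0" if "t0 \<in> closure U" "t0 \<notin> U"
      using frontier[of t0] that U by (simp add: frontier_def interior_open)
    then consider "k t0 < g t0" | "t0 \<in> U" | "t0 \<in> - closure U" by blast
    then show ?thesis
    proof cases
      case 1
      then show ?thesis using \<open>open {t. k t < g t}\<close> g
        by (intro exI[of _ "{t. k t < g t}"] exI[of _ g]) auto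
    next
      case 2
      then show ?thesis using U convex_on_max[OF g k]
        by (intro exI[of _ U] exI[of _ "\<lambda>t. max (g t) (k t)"]) auto
    next
      case 3
      then show ?thesis using g closure_subset
        by (intro exI[of _ "- closure U"] exI[of _ g]) auto
    qed
  qed
  then obtain V f where V: "open V" "t0 \<in> V" "\<And>t. t \<in> V \<Longrightarrow> ?h t = f t"
    and "convex_on UNIV f"
    by blast
  obtain e where "e > 0" "ball t0 e \<subseteq> V"
    using V open_contains_ball by blast
  have "convex_on (ball t0 e) f"
    using convex_on_subset[OF \<open>convex_on UNIV f\<close>] by simp
  then have "convex_on (ball t0 e) ?h"
    by (rule convex_on_eq) (use V(3) \<open>ball t0 e \<subseteq> V\<close> in force)
  then show "\<exists>e>0. convex_on (ball t0 e) ?h" using \<open>e > 0\<close> by blast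
qed

lemma frontier_vimage_subset:
  fixes f :: "'a::t2_space \<Rightarrow> 'b::topological_space"
  assumes "continuous_on UNIV f" "open B"
  shows "frontier (f -` B) \<subseteq> f -` frontier B"
proof -
  have cont: "\<And>x. continuous (at x) f"
    using assms(1) continuous_on_eq_continuous_at open_UNIV by blast
  have "closure (f -` B) \<subseteq> f -` closure B"
    using continuous_closed_vimage[OF closed_closure cont] closure_subset
    by (intro closure_minimal) auto
  moreover have "open (f -` B)" using continuous_open_vimage[OF assms(2) cont] .
  ultimately show ?thesis using assms(2) by (auto simp: frontier_def interior_open)
qed

lemma rc_convex_glue:
  assumes "rc_convex g" "rc_convex \<psi>" "open B" "\<And>y. y \<in> frontier B \<Longrightarrow> \<psi> y < g y"
  shows "rc_convex (\<lambda>w. if w \<in> B then max (g w) (\<psi> w) else g w)"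
  unfolding rc_convex_iff_lines
proof (intro allI impI)
  fix x v :: pt3 assume v: "snd v = 0 \<or> v = ((0, 0), 1)"
  define \<gamma> where "\<gamma> = (\<lambda>t::real. x + t *\<^sub>R v)"
  have "continuous_on UNIV \<gamma>" unfolding \<gamma>_def by (intro continuous_intros)
  then have "open (\<gamma> -` B)" "frontier (\<gamma> -` B) \<subseteq> \<gamma> -` frontier B"
    using assms(3) frontier_vimage_subset open_vimage by blast+
  moreover have "convex_on UNIV (\<lambda>t. g (\<gamma> t))" "convex_on UNIV (\<lambda>t. \<psi> (\<gamma> t))"
    using assms(1,2) v unfolding rc_convex_iff_lines \<gamma>_def by blast+
  ultimately have
    "convex_on UNIV (\<lambda>t. if t \<in> \<gamma> -` B then max (g (\<gamma> t)) (\<psi> (\<gamma> t)) else g (\<gamma> t))"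
    using assms(4) by (intro convex_on_glue) auto
  then show "convex_on UNIV (\<lambda>t. if x + t *\<^sub>R v \<in> B then max (g (x + t *\<^sub>R v)) (\<psi> (x + t *\<^sub>R v))
      else g (x + t *\<^sub>R v))"
    unfolding \<gamma>_def by simp
qed

lemma rc_hull_maximum_principle:
  assumes "finite K" "open B" "bounded B" "K \<inter> B = {}" "rc_convex \<phi>"
    and boundary: "\<And>y. y \<in> rc_hull K \<inter> frontier B \<Longrightarrow> \<phi> y \<le> 0"
    and x: "x \<in> rc_hull K \<inter> B"
  shows "\<phi> x \<le> 0"
proof (rule ccontr)
  assume "\<not> \<phi> x \<le> 0"
  define \<psi> where "\<psi> = (\<lambda>y. \<phi> y - \<phi> x / 2)"
  have "rc_convex \<psi>"
    unfolding \<psi>_def using rc_convex_affine[OF assms(5), of 1 "- (\<phi> x / 2)"] by simp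
  then have "continuous_on UNIV \<psi>" by (rule rc_convex_continuous)
  define S where "S = frontier B \<inter> {y. 0 \<le> \<psi> y}"
  have "compact S" unfolding S_def
    using \<open>continuous_on UNIV \<psi>\<close> assms(3)
    by (intro compact_Int_closed compact_frontier_bounded closed_Collect_le continuous_intros)
  moreover have "S \<inter> rc_hull K = {}"
    using boundary \<open>\<not> \<phi> x \<le> 0\<close> unfolding S_def \<psi>_def by fastforce
  ultimately obtain g where g: "rc_convex g" "\<And>w. 0 \<le> g w" "\<And>k. k \<in> K \<Longrightarrow> g k = 0"
    "\<And>y. y \<in> S \<Longrightarrow> \<psi> y < g y"
    using rc_convex_above_on_compact[OF assms(1) _ \<open>continuous_on UNIV \<psi>\<close>] by blast
  have "\<psi> y < g y" if "y \<in> frontier B" for y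
    using g(2,4)[of y] that unfolding S_def by force
  define h where "h = (\<lambda>w. if w \<in> B then max (g w) (\<psi> w) else g w)"
  have "rc_convex h"
    unfolding h_def by (rule rc_convex_glue[OF g(1) \<open>rc_convex \<psi>\<close> assms(2)]) fact
  moreover have "K \<noteq> {}" using x rc_hull_empty by auto
  then have "h ` K = {0}" using assms(4) g(3) unfolding h_def by auto
  ultimately have "h x \<le> 0" using x unfolding rc_hull_def by fastforce
  moreover have "\<psi> x \<le> h x" using x unfolding h_def by simp
  ultimately show False using \<open>\<not> \<phi> x \<le> 0\<close> unfolding \<psi>_def by simp
qed

lemma cross_ne_zero_if_not_collinear:
  fixes a b c :: "real \<times> real"
  assumes "\<not> collinear {a, b, c}"
  shows "(fst b - fst a) * (snd c - snd a) - (snd b - snd a) * (fst c - fst a) \<noteq> 0"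
proof
  assume cross: "(fst b - fst a) * (snd c - snd a) - (snd b - snd a) * (fst c - fst a) = 0"
  define m :: "real \<times> real" where "m = (- (snd b - snd a), fst b - fst a)"
  have "collinear {a, b, c}"
  proof (cases "m = 0")
    case True
    then have "a = b" unfolding m_def by (simp add: prod_eq_iff)
    then show ?thesis by simp
  next
    case False
    have "{a, b, c} \<subseteq> {u. m \<bullet> u = m \<bullet> a}"
      using cross unfolding m_def by (auto simp: inner_prod_def algebra_simps)
    then have "aff_dim {a, b, c} \<le> aff_dim {u. m \<bullet> u = m \<bullet> a}" by (rule aff_dim_subset)
    also have "\<dots> = 1" using False by simp
    finally show ?thesis by (simp add: collinear_aff_dim)
  qed
  then show False using assms by simp
qed

lemma interior_triangle_edge_separation:
  fixes a b c u :: "real \<times> real"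
  assumes "u \<in> interior (convex hull {a, b, c})"
  obtains n where "n \<bullet> b = n \<bullet> a" "n \<bullet> a < n \<bullet> u"
proof -
  have "aff_dim (convex hull {a, b, c}) = 2"
    using aff_dim_nonempty_interior assms by fastforce
  then have "\<not> collinear {a, b, c}" by (simp add: collinear_aff_dim aff_dim_convex_hull)
  define \<kappa> where "\<kappa> = (fst b - fst a) * (snd c - snd a) - (snd b - snd a) * (fst c - fst a)"
  have "\<kappa> \<noteq> 0" unfolding \<kappa>_def using cross_ne_zero_if_not_collinear \<open>\<not> collinear {a, b, c}\<close> .
  define n :: "real \<times> real" where "n = \<kappa> *\<^sub>R (- (snd b - snd a), fst b - fst a)"
  have "n \<noteq> 0" using \<open>\<kappa> \<noteq> 0\<close> unfolding n_def \<kappa>_def by (auto simp: prod_eq_iff)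
  have "n \<bullet> b = n \<bullet> a" "n \<bullet> c = n \<bullet> a + \<kappa> * \<kappa>"
    unfolding n_def \<kappa>_def by (simp_all add: inner_prod_def algebra_simps)
  then have "convex hull {a, b, c} \<subseteq> {v. n \<bullet> a \<le> n \<bullet> v}"
    by (intro hull_minimal) (auto simp: convex_halfspace_ge)
  then have "u \<in> interior {v. n \<bullet> a \<le> n \<bullet> v}" using assms interior_mono by blast
  then have "n \<bullet> a < n \<bullet> u" using \<open>n \<noteq> 0\<close> by simp
  with \<open>n \<bullet> b = n \<bullet> a\<close> show thesis by (rule that)
qed

lemma rc_convex_affine_product: "rc_convex (\<lambda>y. (n \<bullet> fst y + r) * (\<sigma> * snd y + \<tau>))"
  unfolding rc_convex_iff_lines
proof (intro allI impI)
  fix x v :: pt3 assume "snd v = 0 \<or> v = ((0, 0), 1)"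
  then obtain A B
    where "\<And>t. (n \<bullet> fst (x + t *\<^sub>R v) + r) * (\<sigma> * snd (x + t *\<^sub>R v) + \<tau>) = A + B * t"
  proof
    assume "snd v = 0"
    show thesis
      by (rule that[of "(n \<bullet> fst x + r) * (\<sigma> * snd x + \<tau>)"
            "(n \<bullet> fst v) * (\<sigma> * snd x + \<tau>)"])
        (simp add: \<open>snd v = 0\<close> inner_add_right algebra_simps)
  next
    assume "v = ((0, 0), 1)"
    show thesis
      by (rule that[of "(n \<bullet> fst x + r) * (\<sigma> * snd x + \<tau>)" "(n \<bullet> fst x + r) * \<sigma>"])
        (simp add: \<open>v = ((0, 0), 1)\<close> inner_prod_def algebra_simps)
  qed
  then show "convex_on UNIV (\<lambda>t. (n \<bullet> fst (x + t *\<^sub>R v) + r) * (\<sigma> * snd (x + t *\<^sub>R v) + \<tau>))"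
    using convex_on_affine_real[of A B] by simp
qed

lemma D_prism_face_function:
  fixes a b c :: "real \<times> real"
  assumes x: "x \<in> interior ((convex hull {a, b, c}) \<times> {h0..h1})"
    and F: "F \<in> {closed_segment a b \<times> {h0..h1}, closed_segment b c \<times> {h0..h1},
                 closed_segment c a \<times> {h0..h1}}"
    and G: "G \<in> {(convex hull {a, b, c}) \<times> {h0}, (convex hull {a, b, c}) \<times> {h1}}"
  obtains \<phi> where "rc_convex \<phi>" "\<And>y. y \<in> F \<union> G \<Longrightarrow> \<phi> y = 0" "0 < \<phi> x"
proof -
  have xT: "fst x \<in> interior (convex hull {a, b, c})" and xH: "h0 < snd x" "snd x < h1"
    using x by (auto simp: interior_Times)
  have edge: "\<exists>n r. (\<forall>u\<in>closed_segment p q. n \<bullet> u + r = 0) \<and> 0 < n \<bullet> fst x + r"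
    if hull: "convex hull {p, q, s} = convex hull {a, b, c}" for p q s
  proof -
    obtain n where n: "n \<bullet> q = n \<bullet> p" "n \<bullet> p < n \<bullet> fst x"
      using interior_triangle_edge_separation[of "fst x" p q s] xT hull by metis
    have "closed_segment p q \<subseteq> {u. n \<bullet> u = n \<bullet> p}"
      unfolding segment_convex_hull using n(1) by (intro hull_minimal) (auto simp: convex_hyperplane)
    then show ?thesis using n(2) by (intro exI[of _ n] exI[of _ "- (n \<bullet> p)"]) auto
  qed
  obtain e where e: "F = e \<times> {h0..h1}"
    "e \<in> {closed_segment a b, closed_segment b c, closed_segment c a}"
    using F by blast
  have "convex hull {b, c, a} = convex hull {a, b, c}" "convex hull {c, a, b} = convex hull {a, b, c}"
    by (simp_all add: insert_commute)
  then have "\<exists>n r. (\<forall>u\<in>e. n \<bullet> u + r = 0) \<and> 0 < n \<bullet> fst x + r"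
    using e(2) edge[of a b c] edge[of b c a] edge[of c a b] by blast
  then obtain n r where n: "\<And>u. u \<in> e \<Longrightarrow> n \<bullet> u + r = 0" "0 < n \<bullet> fst x + r"
    by blast
  obtain \<sigma> \<tau> where \<sigma>: "\<And>y. y \<in> G \<Longrightarrow> \<sigma> * snd y + \<tau> = 0" "0 < \<sigma> * snd x + \<tau>"
  proof -
    consider "G = (convex hull {a, b, c}) \<times> {h0}" | "G = (convex hull {a, b, c}) \<times> {h1}"
      using G by blast
    then show thesis
    proof cases
      case 1
      then show thesis using xH by (intro that[of 1 "- h0"]) auto
    next
      case 2
      then show thesis using xH by (intro that[of "- 1" h1]) auto
    qed
  qed
  show thesis
    by (rule that[OF rc_convex_affine_product[of n r \<sigma> \<tau>]]) (use e(1) n \<sigma> in auto)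
qed

theorem theorem4p3:
  fixes K M B :: "pt3 set" and p :: pt3
  assumes "finite K"
    and "rc_hull K \<subseteq> M"
    and "p \<in> M" and "p \<notin> K"
    and "extremal_point M p"
    and "D_prism M K p B"
  shows "rc_hull K \<subseteq> M - B"
proof -
  obtain a b c :: "real \<times> real" and h0 h1 :: real and F G where
    B: "B = interior ((convex hull {a, b, c}) \<times> {h0..h1})" and KB: "K \<inter> B = {}"
    and F: "F \<in> {closed_segment a b \<times> {h0..h1}, closed_segment b c \<times> {h0..h1},
                 closed_segment c a \<times> {h0..h1}}"
    and G: "G \<in> {(convex hull {a, b, c}) \<times> {h0}, (convex hull {a, b, c}) \<times> {h1}}"
    and MFG: "M \<inter> frontier B \<subseteq> F \<union> G"
    using assms(6) unfolding D_prism_def Let_def by blast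
  have "open B" unfolding B by simp
  have "bounded B" unfolding B
    by (intro bounded_subset[OF _ interior_subset] bounded_Times compact_imp_bounded
        compact_convex_hull) auto
  have "x \<notin> B" if "x \<in> rc_hull K" for x
  proof
    assume "x \<in> B"
    then obtain \<phi> where \<phi>: "rc_convex \<phi>" "\<And>y. y \<in> F \<union> G \<Longrightarrow> \<phi> y = 0" "0 < \<phi> x"
      using D_prism_face_function[OF _ F G] unfolding B by blast
    have "\<phi> y \<le> 0" if "y \<in> rc_hull K \<inter> frontier B" for y
    proof -
      have "y \<in> F \<union> G" using MFG assms(2) that by blast
      then show ?thesis using \<phi>(2) by simp
    qed
    moreover have "x \<in> rc_hull K \<inter> B" using that \<open>x \<in> B\<close> by blast
    ultimately have "\<phi> x \<le> 0"
      by (rule rc_hull_maximum_principle[OF assms(1) \<open>open B\<close> \<open>bounded B\<close> KB \<phi>(1)])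
    with \<phi>(3) show False by simp
  qed
  then show ?thesis using assms(2) by blast
qed

end
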